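(* Let $n\ge k\ge 1$ and let $Z_1,\ldots,Z_k$ be subsets of $[n]$, each of cardinality $k-1$, such that $|\bigcap_{i\in I}Z_i|\le k-|I|$ for every nonempty subset $I\subseteq[k]$, and additionally $|Z_i\cap Z_{i'}|\le 1$ for all $i\ne i'$. Then there is a multiset that arises as the multiset union of exactly one choice $(\sigma,(S_1,\ldots,S_k))$.
   Context: $[n]=\{1,\ldots,n\}$. A choice is a pair $(\sigma,(S_1,\ldots,S_k))$ where $\sigma$ is a permutation of $[k]$ and $S_i\subseteq Z_i$ with $|S_i|=\sigma(i)-1$ for each $i\in[k]$; its multiset union is $S_1\uplus\cdots\uplus S_k$, the multiset in which each $j\in[n]$ has multiplicity equal to the number of $i$ with $j\in S_i$. Two different choices are counted as different even if they have the same permutation (i.e., choices differ if either $\sigma$ or some $S_i$ differs). *)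

theory Defs
  imports "HOL-Library.Multiset" "HOL-Combinatorics.Permutations"
begin

text \<open>A choice for the family Z_1,...,Z_k: a permutation sigma of {1..k} together with
  sets S_i (i in {1..k}) with S_i a subset of Z_i and |S_i| = sigma(i) - 1.
  The function S is taken to be empty outside {1..k}, so that choices correspond
  bijectively to pairs (sigma, (S_1,...,S_k)).\<close>
definition choices :: "nat \<Rightarrow> (nat \<Rightarrow> nat set) \<Rightarrow> ((nat \<Rightarrow> nat) \<times> (nat \<Rightarrow> nat set)) set" where
  "choices k Z = {(\<sigma>, S). \<sigma> permutes {1..k} \<and>
      (\<forall>i\<in>{1..k}. S i \<subseteq> Z i \<and> card (S i) = \<sigma> i - 1) \<and>
      (\<forall>i. i \<notin> {1..k} \<longrightarrow> S i = {})}"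

definition choice_union :: "nat \<Rightarrow> ((nat \<Rightarrow> nat) \<times> (nat \<Rightarrow> nat set)) \<Rightarrow> nat multiset" where
  "choice_union k c = (\<Sum>i\<in>{1..k}. mset_set (snd c i))"

end

theory Submission
  imports Defs
begin

text \<open>
  Call a choice \<open>(\<sigma>, S)\<close> rigid if \<open>S l \<inter> Z m \<subseteq> S m\<close> whenever \<open>\<sigma> l < \<sigma> m\<close>, and
  \<open>S m \<inter> Z l \<subseteq> S l\<close> whenever \<open>\<sigma> m = \<sigma> l + 1\<close>. Since distinct \<open>Z\<close>'s share at most one
  point, the sets at positions \<open>\<le> j\<close> of a rigid choice cover at most \<open>j - 2\<close> points of any
  \<open>Z l\<close> with \<open>\<sigma> l < j\<close>. Hence any choice with the same multiset union must agree with it,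
  position by position from \<open>k\<close> downwards: its set at position \<open>j\<close> has \<open>j - 1\<close> points
  covered by positions \<open>\<le> j\<close>, which forces the index and then the set.

  A rigid choice exists. As the \<open>Z i\<close> have empty common intersection, there are three of
  them with empty intersection; put them at the top positions \<open>k - 2, k - 1, k\<close>. Fill the
  positions from the bottom greedily, each set consisting of the points forced into it by
  lower positions plus fresh points avoiding its predecessor and the set at position
  \<open>k - 1\<close>; the pairwise intersection bound leaves enough room. Finally take all of the
  set at position \<open>k\<close>, and at position \<open>k - 1\<close> all points but one: a point outside the
  top set that is also the only point possibly shared with position \<open>k - 2\<close>.
\<close>

lemma card_Int_UN_le:
  assumes "finite I" "\<forall>i\<in>I. card (A \<inter> B i) \<le> 1"
  shows "card (A \<inter> (\<Union>i\<in>I. B i)) \<le> card I"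
proof -
  have "card (A \<inter> (\<Union>i\<in>I. B i)) \<le> (\<Sum>i\<in>I. card (A \<inter> B i))"
    unfolding Int_UN_distrib using assms(1) by (rule card_UN_le)
  also have "\<dots> \<le> (\<Sum>i\<in>I. 1)" using assms(2) by (intro sum_mono) auto
  finally show ?thesis by simp
qed

lemma card_le_Diff_Int3:
  assumes "finite W"
  shows "card W \<le> card (W - U - Y - X) + card (W \<inter> U) + card (W \<inter> Y) + card (W \<inter> X)"
proof -
  have "card W \<le> card ((W - U - Y - X) \<union> (W \<inter> U) \<union> (W \<inter> Y) \<union> (W \<inter> X))"
    using assms by (intro card_mono) auto
  also have "\<dots> \<le> card (W - U - Y - X) + card (W \<inter> U) + card (W \<inter> Y) + card (W \<inter> X)"
    by (meson add_le_mono card_Un_le le_refl order_trans)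
  finally show ?thesis .
qed

definition rigid_choice :: "nat \<Rightarrow> (nat \<Rightarrow> 'a set) \<Rightarrow> (nat \<Rightarrow> nat) \<Rightarrow> (nat \<Rightarrow> 'a set) \<Rightarrow> bool" where
  "rigid_choice k Z \<sigma> S \<longleftrightarrow>
     (\<forall>l\<in>{1..k}. \<forall>m\<in>{1..k}. \<sigma> l < \<sigma> m \<longrightarrow> S l \<inter> Z m \<subseteq> S m) \<and>
     (\<forall>l\<in>{1..k}. \<forall>m\<in>{1..k}. \<sigma> m = Suc (\<sigma> l) \<longrightarrow> S m \<inter> Z l \<subseteq> S l)"

lemma choicesD:
  assumes "(\<sigma>, S) \<in> choices k Z"
  shows "\<sigma> permutes {1..k}" and "\<And>i. i \<in> {1..k} \<Longrightarrow> S i \<subseteq> Z i \<and> card (S i) = \<sigma> i - 1"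
    and "\<And>i. i \<notin> {1..k} \<Longrightarrow> S i = {}"
  using assms unfolding choices_def by auto

lemma rigid_choice_card_Int_lower_le:
  assumes ch: "(\<sigma>, S) \<in> choices k Z" and rig: "rigid_choice k Z \<sigma> S"
    and fin: "\<forall>i\<in>{1..k}. finite (Z i)"
    and pw: "\<forall>i\<in>{1..k}. \<forall>i'\<in>{1..k}. i \<noteq> i' \<longrightarrow> card (Z i \<inter> Z i') \<le> 1"
    and l: "l \<in> {1..k}" and lj: "\<sigma> l < j"
  shows "card (Z l \<inter> (\<Union>m\<in>{m\<in>{1..k}. \<sigma> m \<le> j}. S m)) \<le> j - 2"
proof -
  have sp: "\<sigma> permutes {1..k}" and S: "\<And>i. i \<in> {1..k} \<Longrightarrow> S i \<subseteq> Z i \<and> card (S i) = \<sigma> i - 1"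
    using choicesD[OF ch] by auto
  have sinj: "\<sigma> a = \<sigma> b \<Longrightarrow> a = b" for a b
    using permutes_inj[OF sp] by (auto dest: injD)
  define R where "R = {m\<in>{1..k}. Suc (\<sigma> l) < \<sigma> m \<and> \<sigma> m \<le> j}"
  \<comment> \<open>Positions up to \<open>\<sigma> l + 1\<close> contribute only elements of \<open>S l\<close>; each later one at most one.\<close>
  have sub: "Z l \<inter> (\<Union>m\<in>{m\<in>{1..k}. \<sigma> m \<le> j}. S m) \<subseteq> S l \<union> Z l \<inter> (\<Union>m\<in>R. S m)"
  proof
    fix x assume x: "x \<in> Z l \<inter> (\<Union>m\<in>{m\<in>{1..k}. \<sigma> m \<le> j}. S m)"
    then obtain m where m: "m \<in> {1..k}" "\<sigma> m \<le> j" "x \<in> S m" by auto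
    consider "m = l" | "\<sigma> m < \<sigma> l" | "\<sigma> m = Suc (\<sigma> l)" | "Suc (\<sigma> l) < \<sigma> m"
      using sinj by (metis less_antisym linorder_neqE_nat)
    then show "x \<in> S l \<union> Z l \<inter> (\<Union>m\<in>R. S m)"
    proof cases
      case 2 then show ?thesis using rig m l x unfolding rigid_choice_def by blast
    next
      case 3 then show ?thesis using rig m l x unfolding rigid_choice_def by blast
    qed (use m x in \<open>auto simp: R_def\<close>)
  qed
  have finR: "finite R" unfolding R_def by auto
  have cR: "card R \<le> j - Suc (\<sigma> l)"
  proof -
    have "card R = card (\<sigma> ` R)" using sinj by (intro card_image[symmetric] inj_onI) auto
    also have "\<dots> \<le> card {Suc (Suc (\<sigma> l))..j}" by (intro card_mono) (auto simp: R_def)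
    finally show ?thesis by simp
  qed
  have "finite (Z l)" using fin l by blast
  then have "finite (S l)" using S[OF l] finite_subset by blast
  with \<open>finite (Z l)\<close> have "card (Z l \<inter> (\<Union>m\<in>{m\<in>{1..k}. \<sigma> m \<le> j}. S m))
      \<le> card (S l \<union> Z l \<inter> (\<Union>m\<in>R. S m))"
    using sub by (intro card_mono) auto
  also have "\<dots> \<le> card (S l) + card (Z l \<inter> (\<Union>m\<in>R. S m))" by (rule card_Un_le)
  also have "card (Z l \<inter> (\<Union>m\<in>R. S m)) \<le> card R"
  proof (rule card_Int_UN_le[OF finR], intro ballI)
    fix m assume "m \<in> R"
    then have m: "m \<in> {1..k}" "m \<noteq> l" unfolding R_def by auto
    have "card (Z l \<inter> S m) \<le> card (Z l \<inter> Z m)"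
      using S m \<open>finite (Z l)\<close> by (intro card_mono) auto
    also have "\<dots> \<le> 1" using pw l m by auto
    finally show "card (Z l \<inter> S m) \<le> 1" .
  qed
  finally have "card (Z l \<inter> (\<Union>m\<in>{m\<in>{1..k}. \<sigma> m \<le> j}. S m)) \<le> \<sigma> l - 1 + card R"
    using S[OF l] by simp
  moreover have "1 \<le> \<sigma> l" using permutes_in_image[OF sp] l by auto
  ultimately show ?thesis using cR lj by linarith
qed

lemma rigid_choice_lower_union_Int:
  assumes "(\<sigma>, S) \<in> choices k Z" "rigid_choice k Z \<sigma> S" "i \<in> {1..k}"
  shows "Z i \<inter> (\<Union>m\<in>{m\<in>{1..k}. \<sigma> m \<le> \<sigma> i}. S m) \<subseteq> S i"
proof
  have sinj: "\<sigma> a = \<sigma> b \<Longrightarrow> a = b" for a b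
    using permutes_inj[OF choicesD(1)[OF assms(1)]] by (auto dest: injD)
  fix x assume "x \<in> Z i \<inter> (\<Union>m\<in>{m\<in>{1..k}. \<sigma> m \<le> \<sigma> i}. S m)"
  then obtain m where m: "m \<in> {1..k}" "\<sigma> m \<le> \<sigma> i" "x \<in> S m" "x \<in> Z i" by auto
  show "x \<in> S i"
  proof (cases "m = i")
    case False
    then have "\<sigma> m < \<sigma> i" using m sinj by (metis le_neq_implies_less)
    then show ?thesis using assms(2,3) m unfolding rigid_choice_def by blast
  qed (use m in auto)
qed

lemma rigid_choice_determined:
  assumes ch: "(\<sigma>, S) \<in> choices k Z" and rig: "rigid_choice k Z \<sigma> S"
    and fin: "\<forall>i\<in>{1..k}. finite (Z i)"
    and pw: "\<forall>i\<in>{1..k}. \<forall>i'\<in>{1..k}. i \<noteq> i' \<longrightarrow> card (Z i \<inter> Z i') \<le> 1"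
    and i: "i \<in> {1..k}" and ij: "\<sigma> i \<le> j"
    and T: "T \<subseteq> Z i \<inter> (\<Union>m\<in>{m\<in>{1..k}. \<sigma> m \<le> j}. S m)" and cT: "card T = j - 1"
  shows "\<sigma> i = j \<and> T = S i"
proof -
  have S: "S i \<subseteq> Z i" "card (S i) = \<sigma> i - 1" "1 \<le> \<sigma> i"
    using choicesD(2)[OF ch i] permutes_in_image[OF choicesD(1)[OF ch]] i by auto
  have finZU: "finite (Z i \<inter> (\<Union>m\<in>{m\<in>{1..k}. \<sigma> m \<le> j}. S m))" using fin i by auto
  have "\<sigma> i = j"
  proof (rule ccontr)
    assume "\<sigma> i \<noteq> j"
    then have lt: "\<sigma> i < j" using ij by simp
    have "j - 1 \<le> card (Z i \<inter> (\<Union>m\<in>{m\<in>{1..k}. \<sigma> m \<le> j}. S m))"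
      using card_mono[OF finZU T] cT by simp
    also have "\<dots> \<le> j - 2" by (rule rigid_choice_card_Int_lower_le[OF ch rig fin pw i lt])
    finally show False using lt S(3) by simp
  qed
  moreover have "T \<subseteq> S i"
    using T rigid_choice_lower_union_Int[OF ch rig i] \<open>\<sigma> i = j\<close> by auto
  ultimately show ?thesis
    using cT S finite_subset[OF S(1)] fin i by (metis card_subset_eq)
qed

lemma choice_union_agree_outside:
  assumes eq: "choice_union k (\<sigma>', S') = choice_union k (\<sigma>, S)"
    and L: "L \<subseteq> {1..k}" and agree: "\<forall>m\<in>{1..k} - L. S' m = S m"
    and fin: "\<forall>m\<in>L. finite (S m) \<and> finite (S' m)"
  shows "(\<Union>m\<in>L. S' m) = (\<Union>m\<in>L. S m)"
proof -
  have "(\<Sum>m\<in>{1..k} - L. mset_set (S' m)) + (\<Sum>m\<in>L. mset_set (S' m))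
      = (\<Sum>m\<in>{1..k} - L. mset_set (S m)) + (\<Sum>m\<in>L. mset_set (S m))"
    using eq sum.subset_diff[OF L, of "\<lambda>m. mset_set (S' m)"]
      sum.subset_diff[OF L, of "\<lambda>m. mset_set (S m)"]
    unfolding choice_union_def by simp
  then have "(\<Sum>m\<in>L. mset_set (S' m)) = (\<Sum>m\<in>L. mset_set (S m))"
    using sum.cong[OF refl, of "{1..k} - L" "\<lambda>m. mset_set (S' m)" "\<lambda>m. mset_set (S m)"] agree
    by simp
  then have "set_mset (\<Sum>m\<in>L. mset_set (S' m)) = set_mset (\<Sum>m\<in>L. mset_set (S m))" by simp
  moreover have "finite L" using L finite_subset by blast
  ultimately show ?thesis using fin by (simp add: set_mset_sum)
qed

lemma rigid_choice_agree_at: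
  assumes ch: "(\<sigma>, S) \<in> choices k Z" and rig: "rigid_choice k Z \<sigma> S"
    and fin: "\<forall>i\<in>{1..k}. finite (Z i)"
    and pw: "\<forall>i\<in>{1..k}. \<forall>i'\<in>{1..k}. i \<noteq> i' \<longrightarrow> card (Z i \<inter> Z i') \<le> 1"
    and ch': "(\<sigma>', S') \<in> choices k Z"
    and eq: "choice_union k (\<sigma>', S') = choice_union k (\<sigma>, S)"
    and j: "j \<in> {1..k}" and above: "\<forall>i\<in>{1..k}. j < \<sigma> i \<longrightarrow> \<sigma>' i = \<sigma> i \<and> S' i = S i"
  shows "\<exists>i\<in>{1..k}. \<sigma> i = j \<and> \<sigma>' i = j \<and> S' i = S i"
proof -
  have finS: "finite (S i)" and finS': "finite (S' i)" if "i \<in> {1..k}" for i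
    using choicesD(2)[OF ch that] choicesD(2)[OF ch' that] fin that finite_subset by blast+
  obtain i0 where i0: "i0 \<in> {1..k}" "\<sigma>' i0 = j"
    using j permutes_image[OF choicesD(1)[OF ch']] by (metis imageE)
  define L where "L = {m\<in>{1..k}. \<sigma> m \<le> j}"
  have L: "L \<subseteq> {1..k}" unfolding L_def by auto
  have "\<sigma> i0 \<le> j"
  proof (rule ccontr)
    assume "\<not> \<sigma> i0 \<le> j"
    then show False using above i0 by auto
  qed
  then have i0L: "i0 \<in> L" using i0(1) unfolding L_def by simp
  have "\<forall>m\<in>{1..k} - L. S' m = S m" using above unfolding L_def by auto
  moreover have "\<forall>m\<in>L. finite (S m) \<and> finite (S' m)" using L finS finS' by auto
  ultimately have "(\<Union>m\<in>L. S' m) = (\<Union>m\<in>L. S m)" by (rule choice_union_agree_outside[OF eq L])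
  then have "S' i0 \<subseteq> Z i0 \<inter> (\<Union>m\<in>{m\<in>{1..k}. \<sigma> m \<le> j}. S m)"
    using i0L choicesD(2)[OF ch' i0(1)] unfolding L_def by blast
  then have "\<sigma> i0 = j \<and> S' i0 = S i0"
    using rigid_choice_determined[OF ch rig fin pw i0(1) \<open>\<sigma> i0 \<le> j\<close>, of "S' i0"]
      choicesD(2)[OF ch' i0(1)] i0 by simp
  then show ?thesis using i0 by blast
qed

lemma rigid_choice_unique:
  assumes ch: "(\<sigma>, S) \<in> choices k Z" and rig: "rigid_choice k Z \<sigma> S"
    and fin: "\<forall>i\<in>{1..k}. finite (Z i)"
    and pw: "\<forall>i\<in>{1..k}. \<forall>i'\<in>{1..k}. i \<noteq> i' \<longrightarrow> card (Z i \<inter> Z i') \<le> 1"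
    and ch': "(\<sigma>', S') \<in> choices k Z"
    and eq: "choice_union k (\<sigma>', S') = choice_union k (\<sigma>, S)"
  shows "(\<sigma>', S') = (\<sigma>, S)"
proof -
  note sp = choicesD(1)[OF ch] and sp' = choicesD(1)[OF ch']
  have sin: "\<sigma> i \<in> {1..k}" if "i \<in> {1..k}" for i using permutes_in_image[OF sp] that by auto
  have "\<forall>i\<in>{1..k}. j < \<sigma> i \<longrightarrow> \<sigma>' i = \<sigma> i \<and> S' i = S i" if "j \<le> k" for j
    using that
  proof (induction rule: inc_induct)
    case base
    show ?case using sin by (meson atLeastAtMost_iff leD)
  next
    case (step n)
    then obtain i0 where i0: "i0 \<in> {1..k}" "\<sigma> i0 = Suc n" "\<sigma>' i0 = Suc n" "S' i0 = S i0"
      using rigid_choice_agree_at[OF ch rig fin pw ch' eq, of "Suc n"] by auto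
    show ?case
    proof (intro ballI impI)
      fix i assume i: "i \<in> {1..k}" and "n < \<sigma> i"
      then consider "Suc n < \<sigma> i" | "\<sigma> i = Suc n" by linarith
      then show "\<sigma>' i = \<sigma> i \<and> S' i = S i"
      proof cases
        case 2
        then have "i = i0" using i0 permutes_inj[OF sp] by (metis injD)
        then show ?thesis using i0 by simp
      qed (use step.IH i in blast)
    qed
  qed
  from this[of 0] have agree: "\<forall>i\<in>{1..k}. \<sigma>' i = \<sigma> i \<and> S' i = S i"
    using sin by (auto simp: Suc_le_eq)
  have "\<sigma>' = \<sigma>"
  proof
    fix i show "\<sigma>' i = \<sigma> i"
      using agree permutes_not_in[OF sp] permutes_not_in[OF sp'] by (cases "i \<in> {1..k}") auto
  qed
  moreover have "S' = S"
  proof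
    fix i show "S' i = S i"
      using agree choicesD(3)[OF ch] choicesD(3)[OF ch'] by (cases "i \<in> {1..k}") auto
  qed
  ultimately show ?thesis by simp
qed

(* The positional form of rigid_choice: T j is the set chosen at position j from W j,
   the set standing at that position. *)
definition staircase :: "nat \<Rightarrow> (nat \<Rightarrow> 'a set) \<Rightarrow> (nat \<Rightarrow> 'a set) \<Rightarrow> bool" where
  "staircase k W T \<longleftrightarrow>
     (\<forall>j\<in>{1..k}. T j \<subseteq> W j \<and> card (T j) = j - 1) \<and>
     (\<forall>l\<in>{1..k}. \<forall>m\<in>{1..k}. l < m \<longrightarrow> T l \<inter> W m \<subseteq> T m) \<and>
     (\<forall>l\<in>{1..<k}. T (Suc l) \<inter> W l \<subseteq> T l)"

lemma staircase_extend:
  assumes st: "staircase j W T" and R: "R \<subseteq> W (Suc j)" "card R = j"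
    and below: "\<forall>l\<in>{1..j}. T l \<inter> W (Suc j) \<subseteq> R"
    and prev: "0 < j \<Longrightarrow> R \<inter> W j \<subseteq> T j"
  shows "staircase (Suc j) W (T(Suc j := R))"
proof -
  have T1: "\<forall>i\<in>{1..j}. T i \<subseteq> W i \<and> card (T i) = i - 1"
    and T2: "\<forall>l\<in>{1..j}. \<forall>m\<in>{1..j}. l < m \<longrightarrow> T l \<inter> W m \<subseteq> T m"
    and T3: "\<forall>l\<in>{1..<j}. T (Suc l) \<inter> W l \<subseteq> T l"
    using st unfolding staircase_def by blast+
  show ?thesis
    unfolding staircase_def
  proof (intro conjI ballI impI)
    fix i assume "i \<in> {1..Suc j}"
    then show "(T(Suc j := R)) i \<subseteq> W i" "card ((T(Suc j := R)) i) = i - 1"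
      using T1 R by auto
  next
    fix l m assume "l \<in> {1..Suc j}" "m \<in> {1..Suc j}" "l < m"
    then show "(T(Suc j := R)) l \<inter> W m \<subseteq> (T(Suc j := R)) m"
      using T2 below by auto
  next
    fix l assume "l \<in> {1..<Suc j}"
    then show "(T(Suc j := R)) (Suc l) \<inter> W l \<subseteq> (T(Suc j := R)) l"
      using T3 prev by auto
  qed
qed

lemma staircase_Int_UN_subset:
  assumes st: "staircase j W T" and "0 < j"
  shows "W j \<inter> (\<Union>i\<in>{1..j}. T i) \<subseteq> T j"
proof
  fix x assume "x \<in> W j \<inter> (\<Union>i\<in>{1..j}. T i)"
  then obtain i where i: "i \<in> {1..j}" "x \<in> T i" "x \<in> W j" by auto
  show "x \<in> T j"
  proof (cases "i = j")
    case False
    then have "T i \<inter> W j \<subseteq> T j" using st i assms(2) unfolding staircase_def by auto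
    then show ?thesis using i by auto
  qed (use i in simp)
qed

lemma staircase_avoiding_Suc:
  fixes W :: "nat \<Rightarrow> 'a set"
  assumes st: "staircase j W T" and avoid: "\<forall>i\<in>{1..j}. T i \<inter> X = {}"
    and cW: "Suc j < card (W (Suc j))"
    and pw: "\<forall>i\<in>{1..j}. card (W (Suc j) \<inter> W i) \<le> 1" and cX: "card (W (Suc j) \<inter> X) \<le> 1"
  shows "\<exists>T'. staircase (Suc j) W T' \<and> (\<forall>i\<in>{1..Suc j}. T' i \<inter> X = {})"
proof -
  have finW: "finite (W (Suc j))" using cW by (metis card.infinite less_zeroE)
  define A where "A = W (Suc j) \<inter> (\<Union>i\<in>{1..j}. T i)"
  define B where "B = W (Suc j) - (\<Union>i\<in>{1..j}. T i) - W j - X"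
  have "card A \<le> card {1..j}"
    unfolding A_def
  proof (rule card_Int_UN_le, simp, intro ballI)
    fix i assume i: "i \<in> {1..j}"
    have "card (W (Suc j) \<inter> T i) \<le> card (W (Suc j) \<inter> W i)"
      using st i finW unfolding staircase_def by (intro card_mono) auto
    also have "\<dots> \<le> 1" using pw i by blast
    finally show "card (W (Suc j) \<inter> T i) \<le> 1" .
  qed
  then have cA: "card A \<le> j" by simp
  have cB: "j - card A \<le> card B"
  proof (cases "j = 0")
    case False
    have "card (W (Suc j)) \<le> card B + card A + card (W (Suc j) \<inter> W j) + card (W (Suc j) \<inter> X)"
      unfolding A_def B_def by (rule card_le_Diff_Int3[OF finW])
    also have "card (W (Suc j) \<inter> W j) \<le> 1" using pw False by simp
    also have "card (W (Suc j) \<inter> X) \<le> 1" by (rule cX)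
    finally show ?thesis using cW by simp
  qed simp
  obtain F where F: "F \<subseteq> B" "card F = j - card A"
    using obtain_subset_with_card_n[OF cB] by metis
  have finA: "finite A" and finF: "finite F"
    using finW F(1) unfolding A_def B_def by (auto intro: finite_subset)
  have "A \<inter> F = {}" using F(1) unfolding A_def B_def by auto
  then have cAF: "card (A \<union> F) = j" using card_Un_disjoint[OF finA finF] F(2) cA by simp
  have "A \<inter> W j \<subseteq> T j" if "0 < j"
    using staircase_Int_UN_subset[OF st that] unfolding A_def by blast
  moreover have "A \<union> F \<subseteq> W (Suc j)" "\<forall>l\<in>{1..j}. T l \<inter> W (Suc j) \<subseteq> A \<union> F"
    "F \<inter> W j = {}"
    using F(1) unfolding A_def B_def by auto
  ultimately have "staircase (Suc j) W (T(Suc j := A \<union> F))"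
    using cAF by (intro staircase_extend[OF st]) auto
  moreover have "\<forall>i\<in>{1..Suc j}. (T(Suc j := A \<union> F)) i \<inter> X = {}"
    using avoid F(1) unfolding A_def B_def by auto
  ultimately show ?thesis by blast
qed

lemma staircase_avoiding:
  fixes W :: "nat \<Rightarrow> 'a set"
  assumes "\<forall>i\<in>{1..j}. i < card (W i)"
    and "\<forall>i\<in>{1..j}. \<forall>i'\<in>{1..j}. i \<noteq> i' \<longrightarrow> card (W i \<inter> W i') \<le> 1"
    and "\<forall>i\<in>{1..j}. card (W i \<inter> X) \<le> 1"
  shows "\<exists>T. staircase j W T \<and> (\<forall>i\<in>{1..j}. T i \<inter> X = {})"
  using assms
proof (induction j)
  case 0
  show ?case by (simp add: staircase_def)
next
  case (Suc j)
  then obtain T where "staircase j W T" "\<forall>i\<in>{1..j}. T i \<inter> X = {}"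
    by auto
  moreover have "Suc j < card (W (Suc j))" using Suc.prems(1) by auto
  moreover have "\<forall>i\<in>{1..j}. card (W (Suc j) \<inter> W i) \<le> 1" using Suc.prems(2) by auto
  moreover have "card (W (Suc j) \<inter> X) \<le> 1" using Suc.prems(3) by auto
  ultimately show ?case by (rule staircase_avoiding_Suc)
qed

lemma staircase_exists:
  fixes W :: "nat \<Rightarrow> 'a set"
  assumes k: "2 \<le> k" and cW: "\<forall>i\<in>{1..k}. card (W i) = k - 1"
    and pw: "\<forall>i\<in>{1..k}. \<forall>i'\<in>{1..k}. i \<noteq> i' \<longrightarrow> card (W i \<inter> W i') \<le> 1"
    and w: "w \<in> W (k - 1)" "w \<notin> W k" and below: "3 \<le> k \<Longrightarrow> W (k - 2) \<inter> W (k - 1) \<subseteq> {w}"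
  shows "\<exists>T. staircase k W T"
proof -
  have "\<forall>i\<in>{1..k - 2}. i < card (W i)" using cW by auto
  moreover have "\<forall>i\<in>{1..k - 2}. \<forall>i'\<in>{1..k - 2}. i \<noteq> i' \<longrightarrow> card (W i \<inter> W i') \<le> 1"
    using pw by auto
  moreover have "\<forall>i\<in>{1..k - 2}. card (W i \<inter> W (k - 1)) \<le> 1" using pw by auto
  ultimately obtain T where st: "staircase (k - 2) W T"
    and avoid: "\<forall>i\<in>{1..k - 2}. T i \<inter> W (k - 1) = {}"
    using staircase_avoiding by blast
  have k1: "k - 1 \<in> {1..k}" "Suc (k - 2) = k - 1" "Suc (k - 1) = k" using k by auto
  have "0 < card (W (k - 1))" using cW k1 k by simp
  then have "finite (W (k - 1))" by (rule card_ge_0_finite)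
  then have "card (W (k - 1) - {w}) = k - 2" using cW k1 w by simp
  then have "staircase (Suc (k - 2)) W (T(Suc (k - 2) := W (k - 1) - {w}))"
    using avoid below k1 by (intro staircase_extend[OF st]) auto
  then have st': "staircase (k - 1) W (T(k - 1 := W (k - 1) - {w}))" by (simp only: k1)
  have "staircase (Suc (k - 1)) W (T(k - 1 := W (k - 1) - {w}, Suc (k - 1) := W k))"
    using cW w k1 by (intro staircase_extend[OF st']) auto
  then have "staircase k W (T(k - 1 := W (k - 1) - {w}, k := W k))" by (simp only: k1)
  then show ?thesis by blast
qed

lemma exists_point_outside:
  assumes "finite B" "card (B \<inter> C) < card B" "card (A \<inter> B) \<le> 1" "A \<inter> B \<inter> C = {}"
  shows "\<exists>w\<in>B. w \<notin> C \<and> A \<inter> B \<subseteq> {w}"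
proof (cases "A \<inter> B = {}")
  case True
  have "B - C \<noteq> {}" using assms(2) by (metis Diff_eq_empty_iff inf.absorb1 less_irrefl)
  then show ?thesis using True by blast
next
  case False
  then obtain y where y: "y \<in> A \<inter> B" by blast
  have "finite (A \<inter> B)" using assms(1) by simp
  then have "A \<inter> B \<subseteq> {y}" using assms(3) y by (auto simp: card_le_Suc0_iff_eq)
  then show ?thesis using y assms(4) by blast
qed

lemma exists_third_disjoint:
  fixes Z :: "nat \<Rightarrow> 'a set"
  assumes "3 \<le> k" and fin: "\<forall>i\<in>{1..k}. finite (Z i)"
    and pw: "\<forall>i\<in>{1..k}. \<forall>i'\<in>{1..k}. i \<noteq> i' \<longrightarrow> card (Z i \<inter> Z i') \<le> 1"
    and empty: "(\<Inter>i\<in>{1..k}. Z i) = {}"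
  shows "\<exists>c\<in>{3..k}. Z 1 \<inter> Z 2 \<inter> Z c = {}"
proof (cases "Z 1 \<inter> Z 2 = {}")
  case True
  then show ?thesis using assms(1) by auto
next
  case False
  then obtain x where x: "x \<in> Z 1 \<inter> Z 2" by auto
  have "card (Z 1 \<inter> Z 2) \<le> 1" "finite (Z 1 \<inter> Z 2)" using pw fin assms(1) by auto
  then have "Z 1 \<inter> Z 2 \<subseteq> {x}" using x by (auto simp: card_le_Suc0_iff_eq)
  moreover obtain c where "c \<in> {1..k}" "x \<notin> Z c" using empty x by blast
  moreover have "c \<noteq> 1" "c \<noteq> 2" using calculation x by auto
  ultimately show ?thesis by force
qed

lemma permutes_reflection:
  "(\<lambda>j. if j \<in> {1..k} then Suc k - j else j) permutes {1..k}"
proof (rule bij_imp_permutes)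
  show "bij_betw (\<lambda>j. if j \<in> {1..k} then Suc k - j else j) {1..k} {1..k}"
    by (rule bij_betw_byWitness[where f' = "\<lambda>j. Suc k - j"]) auto
qed auto

lemma rigid_choice_of_staircase:
  assumes \<sigma>: "\<sigma> permutes {1..k}" and st: "staircase k (Z \<circ> inv \<sigma>) T"
  shows "\<exists>S. (\<sigma>, S) \<in> choices k Z \<and> rigid_choice k Z \<sigma> S"
proof -
  have \<sigma>k: "\<sigma> i \<in> {1..k}" "(Z \<circ> inv \<sigma>) (\<sigma> i) = Z i" if "i \<in> {1..k}" for i
    using permutes_in_image[OF \<sigma>] permutes_inverses(2)[OF \<sigma>] that by auto
  have T1: "T (\<sigma> i) \<subseteq> Z i \<and> card (T (\<sigma> i)) = \<sigma> i - 1" if "i \<in> {1..k}" for i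
    using st \<sigma>k[OF that] unfolding staircase_def by (metis comp_apply)
  have T2: "T (\<sigma> l) \<inter> Z m \<subseteq> T (\<sigma> m)" if "l \<in> {1..k}" "m \<in> {1..k}" "\<sigma> l < \<sigma> m" for l m
    using st \<sigma>k[OF that(1)] \<sigma>k[OF that(2)] that(3) unfolding staircase_def by (metis comp_apply)
  have T3: "T (\<sigma> m) \<inter> Z l \<subseteq> T (\<sigma> l)" if "l \<in> {1..k}" "m \<in> {1..k}" "\<sigma> m = Suc (\<sigma> l)" for l m
  proof -
    have "\<sigma> l \<in> {1..<k}" using \<sigma>k[OF that(1)] \<sigma>k[OF that(2)] that(3) by auto
    then show ?thesis using st \<sigma>k[OF that(1)] that(3) unfolding staircase_def by (metis comp_apply)
  qed
  define S where "S i = (if i \<in> {1..k} then T (\<sigma> i) else {})" for i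
  have "(\<sigma>, S) \<in> choices k Z"
    using \<sigma> T1 unfolding choices_def S_def by auto
  moreover have "rigid_choice k Z \<sigma> S"
    using T2 T3 unfolding rigid_choice_def S_def by auto
  ultimately show ?thesis by blast
qed

lemma exists_top_order:
  fixes Z :: "nat \<Rightarrow> 'a set"
  assumes k: "2 \<le> k" and fin: "\<forall>i\<in>{1..k}. finite (Z i)" and cZ: "\<forall>i\<in>{1..k}. card (Z i) = k - 1"
    and pw: "\<forall>i\<in>{1..k}. \<forall>i'\<in>{1..k}. i \<noteq> i' \<longrightarrow> card (Z i \<inter> Z i') \<le> 1"
    and empty: "(\<Inter>i\<in>{1..k}. Z i) = {}"
  shows "\<exists>v w. v permutes {1..k} \<and> w \<in> Z (v (k - 1)) \<and> w \<notin> Z (v k) \<and>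
    (3 \<le> k \<longrightarrow> Z (v (k - 2)) \<inter> Z (v (k - 1)) \<subseteq> {w})"
proof (cases "k = 2")
  case True
  then have "{1..k} = {1, 2}" by auto
  then have "Z 1 \<inter> Z 2 = {}" and "card (Z 1) = 1" using empty cZ True by auto
  then obtain w where "w \<in> Z 1" "w \<notin> Z 2" by (metis card_1_singletonE disjoint_iff insertI1)
  then show ?thesis using True by (intro exI[of _ id]) auto
next
  case False
  then have k3: "3 \<le> k" using k by simp
  obtain c where c: "c \<in> {3..k}" "Z 1 \<inter> Z 2 \<inter> Z c = {}"
    using exists_third_disjoint[OF k3 fin pw empty] by blast
  \<comment> \<open>Reverse \<open>{1..k}\<close>, then swap \<open>3\<close> and \<open>c\<close>: positions \<open>k, k - 1, k - 2\<close> carry \<open>Z 1, Z 2, Z c\<close>.\<close>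
  define v where "v = transpose 3 c \<circ> (\<lambda>j. if j \<in> {1..k} then Suc k - j else j)"
  have "v permutes {1..k}"
    unfolding v_def using c k3 by (intro permutes_compose permutes_reflection permutes_swap_id) auto
  moreover have "v k = 1" "v (k - 1) = 2" "v (k - 2) = c"
    unfolding v_def using c k3 by auto
  moreover obtain w where "w \<in> Z 2" "w \<notin> Z 1" "Z c \<inter> Z 2 \<subseteq> {w}"
  proof -
    have "card (Z 2 \<inter> Z 1) \<le> 1" "card (Z c \<inter> Z 2) \<le> 1" "card (Z 2) = k - 1" "finite (Z 2)"
      using pw cZ fin c k3 by auto
    then show ?thesis
      using exists_point_outside[of "Z 2" "Z 1" "Z c"] that c(2) k3 by fastforce
  qed
  ultimately show ?thesis by metis
qed

lemma exists_rigid_choice: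
  assumes k: "1 \<le> k" and fin: "\<forall>i\<in>{1..k}. finite (Z i)" and cZ: "\<forall>i\<in>{1..k}. card (Z i) = k - 1"
    and pw: "\<forall>i\<in>{1..k}. \<forall>i'\<in>{1..k}. i \<noteq> i' \<longrightarrow> card (Z i \<inter> Z i') \<le> 1"
    and empty: "(\<Inter>i\<in>{1..k}. Z i) = {}"
  shows "\<exists>\<sigma> S. (\<sigma>, S) \<in> choices k Z \<and> rigid_choice k Z \<sigma> S"
proof -
  have "\<exists>\<sigma> T. \<sigma> permutes {1..k} \<and> staircase k (Z \<circ> inv \<sigma>) T"
  proof (cases "k = 1")
    case True
    then have "staircase k (Z \<circ> inv id) (\<lambda>_. {})" by (simp add: staircase_def)
    then show ?thesis using permutes_id by blast
  next
    case False
    obtain v w where v: "v permutes {1..k}" and w: "w \<in> Z (v (k - 1))" "w \<notin> Z (v k)"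
      and below: "3 \<le> k \<Longrightarrow> Z (v (k - 2)) \<inter> Z (v (k - 1)) \<subseteq> {w}"
      using exists_top_order[OF _ fin cZ pw empty] False k by force
    have vk: "v i \<in> {1..k}" if "i \<in> {1..k}" for i using permutes_in_image[OF v] that by simp
    have "\<forall>i\<in>{1..k}. card ((Z \<circ> v) i) = k - 1" using cZ vk by simp
    moreover have "\<forall>i\<in>{1..k}. \<forall>i'\<in>{1..k}. i \<noteq> i' \<longrightarrow> card ((Z \<circ> v) i \<inter> (Z \<circ> v) i') \<le> 1"
      using pw vk permutes_inj[OF v] by (simp add: inj_eq)
    ultimately obtain T where "staircase k (Z \<circ> v) T"
      using staircase_exists[of k "Z \<circ> v" w] False k w below by force
    moreover have "inv (inv v) = v" by (rule permutes_inv_inv[OF v])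
    ultimately show ?thesis using permutes_inv[OF v] by metis
  qed
  then show ?thesis using rigid_choice_of_staircase by blast
qed

theorem theorem3:
  fixes n k :: nat and Z :: "nat \<Rightarrow> nat set"
  assumes "1 \<le> k" and "k \<le> n"
    and "\<forall>i\<in>{1..k}. Z i \<subseteq> {1..n} \<and> card (Z i) = k - 1"
    and "\<forall>I. I \<subseteq> {1..k} \<and> I \<noteq> {} \<longrightarrow> card (\<Inter>i\<in>I. Z i) \<le> k - card I"
    and "\<forall>i\<in>{1..k}. \<forall>i'\<in>{1..k}. i \<noteq> i' \<longrightarrow> card (Z i \<inter> Z i') \<le> 1"
  shows "\<exists>M. \<exists>!c. c \<in> choices k Z \<and> choice_union k c = M"
proof -
  have fin: "\<forall>i\<in>{1..k}. finite (Z i)" using assms(3) finite_subset by blast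
  have cZ: "\<forall>i\<in>{1..k}. card (Z i) = k - 1" using assms(3) by blast
  have "card (\<Inter>i\<in>{1..k}. Z i) \<le> 0" using assms(1) assms(4)[rule_format, of "{1..k}"] by simp
  moreover have "finite (\<Inter>i\<in>{1..k}. Z i)"
    using fin assms(1) by (meson INT_lower atLeastAtMost_iff finite_subset order_refl)
  ultimately have empty: "(\<Inter>i\<in>{1..k}. Z i) = {}" by simp
  obtain \<sigma> S where ch: "(\<sigma>, S) \<in> choices k Z" and rig: "rigid_choice k Z \<sigma> S"
    using exists_rigid_choice[OF assms(1) fin cZ assms(5) empty] by blast
  have "\<exists>!c. c \<in> choices k Z \<and> choice_union k c = choice_union k (\<sigma>, S)"
    using ch rigid_choice_unique[OF ch rig fin assms(5)] by (intro ex1I[of _ "(\<sigma>, S)"]) auto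
  then show ?thesis by blast
qed

end
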